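(* Let $\widetilde T$ be a filling of the Young diagram of a partition $\lambda$ of $n$ using each element of $[\overline n]$ exactly once. Suppose that for some column indices $c_1,c_2$ and integers $i$, $k,l\ge0$, column $c_1$ of $\widetilde T$ is filled from top to bottom with $\overline{i+1},\overline{i+2},\dots,\overline{i+k+l}$ and column $c_2$ is filled from top to bottom with $\overline{i+k+l+1},\dots,\overline{i+k+2l}$. Define tableaux $\widetilde T_0=\widetilde T,\widetilde T_1,\dots,\widetilde T_{(k+l)l}$, where for $1\le j\le (k+l)l$, with $m=\lceil j/(k+l)\rceil$, $\widetilde T_j$ is obtained from $\widetilde T_{j-1}$ by exchanging the entries in positions $((k+l)m-j+1,\,c_1)$ and $(m,\,c_2)$ (positions given as (row, column)). Let $T_j$ be the tabloid obtained from $\widetilde T_j$ by forgetting the order within rows. Then for every $1\le j\le (k+l)l$, the tabloids $T_{j-1}$ and $T_j$ are either equal or connected by a Knuth move.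
   Context: $\overline i=i+n\mathbb Z$, $[\overline n]=\{\overline1,\dots,\overline n\}$. A tabloid of shape $\lambda$ is a sequence $(T_1,\dots,T_{\ell(\lambda)})$ of pairwise disjoint subsets of $[\overline n]$ with $|T_r|=\lambda_r$ and union $[\overline n]$ (row 1 highest); forgetting order within rows of a filling means taking $T_r$ = set of entries in row $r$. $\tau(T)=\{\overline i:\overline i\text{ lies in a strictly higher row of } T\text{ than }\overline{i+1}\}$. $T,T'$ are connected by a Knuth move if $T'$ is obtained from $T$ by exchanging $\overline i$ and $\overline{i+1}$ for some $i$ and neither of $\tau(T),\tau(T')$ contains the other. Rows of the Young diagram are numbered from the top, columns from the left. *)

theory Defs
  imports Complex_Main
begin

definition is_partition :: "nat \<Rightarrow> nat list \<Rightarrow> bool" where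
  "is_partition n lam \<longleftrightarrow> sorted_wrt (\<ge>) lam \<and> 0 \<notin> set lam \<and> sum_list lam = n"

text \<open>Young diagram (English convention): cell (r, c) = (row, column), rows numbered
  from the top starting at 1, columns from the left starting at 1.\<close>
definition young_diagram :: "nat list \<Rightarrow> (nat \<times> nat) set" where
  "young_diagram lam = {(r, c). 1 \<le> r \<and> r \<le> length lam \<and> 1 \<le> c \<and> c \<le> lam ! (r - 1)}"

text \<open>Residues modulo n are represented by their representatives in {0..<n}.
  A filling is a map from cells to residues, bijective from the diagram.\<close>

definition swap_cells :: "(nat \<times> nat \<Rightarrow> int) \<Rightarrow> nat \<times> nat \<Rightarrow> nat \<times> nat \<Rightarrow> (nat \<times> nat \<Rightarrow> int)" where
  "swap_cells F p q = F(p := F q, q := F p)"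

definition tabloid_of :: "nat list \<Rightarrow> (nat \<times> nat \<Rightarrow> int) \<Rightarrow> nat \<Rightarrow> int set" where
  "tabloid_of lam F r = {F (r, c) | c. (r, c) \<in> young_diagram lam}"

definition tau :: "nat \<Rightarrow> (nat \<Rightarrow> int set) \<Rightarrow> int set" where
  "tau n Tb = {x \<in> {0..<int n}. \<exists>r r'. x \<in> Tb r \<and> (x + 1) mod int n \<in> Tb r' \<and> r < r'}"

definition swap_res :: "nat \<Rightarrow> int \<Rightarrow> int \<Rightarrow> int" where
  "swap_res n x y = (if y = x then (x + 1) mod int n else if y = (x + 1) mod int n then x else y)"

definition knuth_move :: "nat \<Rightarrow> (nat \<Rightarrow> int set) \<Rightarrow> (nat \<Rightarrow> int set) \<Rightarrow> bool" where
  "knuth_move n Tb Tb' \<longleftrightarrow>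
     (\<exists>x \<in> {0..<int n}. Tb' = (\<lambda>r. swap_res n x ` Tb r)
        \<and> \<not> tau n Tb \<subseteq> tau n Tb' \<and> \<not> tau n Tb' \<subseteq> tau n Tb)"

fun fill_seq :: "(nat \<times> nat \<Rightarrow> int) \<Rightarrow> nat \<Rightarrow> nat \<Rightarrow> nat \<Rightarrow> nat \<Rightarrow> nat \<Rightarrow> (nat \<times> nat \<Rightarrow> int)" where
  "fill_seq F k l c1 c2 0 = F"
| "fill_seq F k l c1 c2 (Suc j) =
     (let m = nat \<lceil>real (Suc j) / real (k + l)\<rceil>
      in swap_cells (fill_seq F k l c1 c2 j) ((k + l) * m + 1 - Suc j, c1) (m, c2))"

end

theory Submission
  imports Defs "HOL-Combinatorics.Transposition"
begin

text \<open>Each exchange swaps two cells holding consecutive residues x and x + 1. If the cells lie in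
  the same row the tabloid does not change. Otherwise the tabloid is acted on by the transposition
  of x and x + 1, which moves x into or out of tau; the entry x + 2 directly below the cell of
  column c1 (if that cell is higher) or the entry x - 1 directly above it (if it is lower) moves
  out of or into tau in the opposite direction, so neither tau set contains the other.\<close>

lemma less_mult_imp_div_mod_bounds:
  fixes j m l :: nat
  assumes "j < m * l"
  shows "0 < m" "j div m < l" "j mod m < m"
proof -
  show m: "0 < m" using assms by (intro Nat.gr0I) simp
  then show "j mod m < m" by simp
  show "j div m < l" using assms m by (simp add: div_less_iff_less_mult mult.commute)
qed

lemma nat_ceiling_Suc_divide:
  assumes "0 < m"
  shows "nat \<lceil>real (Suc j) / real m\<rceil> = j div m + 1"
proof -
  have "Suc (j mod m) \<le> m"
    using assms by (simp add: Suc_le_eq)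
  then have "0 < real (Suc (j mod m)) / real m" "real (Suc (j mod m)) / real m \<le> 1"
    by (simp_all flip: of_nat_le_iff)
  moreover have "real (Suc j) / real m = real (j div m) + real (Suc (j mod m)) / real m"
    using assms by (simp add: field_simps flip: of_nat_mult of_nat_add)
  ultimately have "\<lceil>real (Suc j) / real m\<rceil> = int (j div m) + 1"
    by (intro ceiling_unique) linarith+
  then show ?thesis by simp
qed

lemma swap_cells_eq_swap: "swap_cells F p q = Fun.swap p q F"
  by (simp add: swap_cells_def Fun.swap_def)

lemma tabloid_of_eq_image:
  "tabloid_of lam F r = F ` {p \<in> young_diagram lam. fst p = r}"
  by (auto simp: tabloid_of_def)

lemma tabloid_of_swap_cells_same_row:
  assumes "(r, c) \<in> young_diagram lam" "(r, c') \<in> young_diagram lam"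
  shows "tabloid_of lam (swap_cells F (r, c) (r, c')) = tabloid_of lam F"
proof
  fix r'
  show "tabloid_of lam (swap_cells F (r, c) (r, c')) r' = tabloid_of lam F r'"
  proof (cases "r' = r")
    case True
    then show ?thesis
      unfolding tabloid_of_eq_image swap_cells_eq_swap using assms by (intro swap_image_eq) auto
  next
    case False
    then show ?thesis
      unfolding tabloid_of_eq_image by (intro image_cong) (auto simp: swap_cells_def)
  qed
qed

lemma tabloid_of_swap_cells_adjacent:
  assumes inj: "inj_on F (young_diagram lam)"
    and p: "p \<in> young_diagram lam" and p': "p' \<in> young_diagram lam" and "p \<noteq> p'"
    and Fp: "F p = x" and Fp': "F p' = (x + 1) mod int n"
  shows "tabloid_of lam (swap_cells F p p') = (\<lambda>r. swap_res n x ` tabloid_of lam F r)"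
proof -
  have "x \<noteq> (x + 1) mod int n"
    using inj_onD[OF inj] p p' \<open>p \<noteq> p'\<close> Fp Fp' by metis
  moreover have "F c \<noteq> x" "F c \<noteq> (x + 1) mod int n"
    if "c \<in> young_diagram lam" "c \<noteq> p" "c \<noteq> p'" for c
    using inj_onD[OF inj] that p p' Fp Fp' by metis+
  ultimately have "swap_cells F p p' c = swap_res n x (F c)" if "c \<in> young_diagram lam" for c
    using that \<open>p \<noteq> p'\<close> Fp Fp' by (auto simp: swap_cells_def swap_res_def)
  then show ?thesis
    unfolding tabloid_of_eq_image image_image by (intro ext image_cong) auto
qed

lemma mem_tau_tabloid_of_iff:
  assumes inj: "inj_on F (young_diagram lam)"
    and p: "p \<in> young_diagram lam" and p': "p' \<in> young_diagram lam"
    and Fp: "F p = v" and Fp': "F p' = (v + 1) mod int n" and v: "v \<in> {0..<int n}"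
  shows "v \<in> tau n (tabloid_of lam F) \<longleftrightarrow> fst p < fst p'"
proof
  assume "v \<in> tau n (tabloid_of lam F)"
  then obtain q q' where "q \<in> young_diagram lam" "q' \<in> young_diagram lam"
      "F q = v" "F q' = (v + 1) mod int n" "fst q < fst q'"
    unfolding tau_def tabloid_of_eq_image by auto
  moreover from calculation have "q = p" "q' = p'"
    using inj_onD[OF inj] p p' Fp Fp' by metis+
  ultimately show "fst p < fst p'" by simp
next
  assume "fst p < fst p'"
  moreover have "v \<in> tabloid_of lam F (fst p)" "(v + 1) mod int n \<in> tabloid_of lam F (fst p')"
    using p p' Fp Fp' unfolding tabloid_of_eq_image by (auto intro: rev_image_eqI)
  ultimately show "v \<in> tau n (tabloid_of lam F)"
    using v unfolding tau_def by blast
qed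

lemma knuth_move_swap_cellsI:
  assumes "inj_on F (young_diagram lam)"
    and "p \<in> young_diagram lam" "p' \<in> young_diagram lam" "p \<noteq> p'"
    and "F p = x" "F p' = (x + 1) mod int n" "x \<in> {0..<int n}"
    and "\<not> tau n (tabloid_of lam F) \<subseteq> tau n (tabloid_of lam (swap_cells F p p'))"
    and "\<not> tau n (tabloid_of lam (swap_cells F p p')) \<subseteq> tau n (tabloid_of lam F)"
  shows "knuth_move n (tabloid_of lam F) (tabloid_of lam (swap_cells F p p'))"
  unfolding knuth_move_def using assms tabloid_of_swap_cells_adjacent[OF assms(1-6)] by blast

lemma knuth_move_swap_cells_succ:
  assumes inj: "inj_on F (young_diagram lam)" and range: "F ` young_diagram lam \<subseteq> {0..<int n}"
    and p: "p \<in> young_diagram lam" and p': "p' \<in> young_diagram lam" and w: "w \<in> young_diagram lam"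
    and Fp: "F p = x" and Fp': "F p' = (x + 1) mod int n" and Fw: "F w = (F p' + 1) mod int n"
    and "w \<noteq> p'" and "fst p < fst w" and "fst w \<le> fst p'"
  shows "knuth_move n (tabloid_of lam F) (tabloid_of lam (swap_cells F p p'))"
proof -
  let ?F' = "swap_cells F p p'"
  have "p \<noteq> p'" "w \<noteq> p" using \<open>fst p < fst w\<close> \<open>fst w \<le> fst p'\<close> by auto
  have inj': "inj_on ?F' (young_diagram lam)"
    unfolding swap_cells_eq_swap using inj p p' by (rule inj_on_imp_inj_on_swap)
  have F'p: "?F' p = (x + 1) mod int n" and F'p': "?F' p' = x" and F'w: "?F' w = F w"
    using Fp Fp' \<open>p \<noteq> p'\<close> \<open>w \<noteq> p\<close> \<open>w \<noteq> p'\<close> by (auto simp: swap_cells_def)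
  have x: "x \<in> {0..<int n}" and y: "F p' \<in> {0..<int n}" using range p p' Fp by auto
  have "x \<in> tau n (tabloid_of lam F)" "x \<notin> tau n (tabloid_of lam ?F')"
    using mem_tau_tabloid_of_iff[OF inj p p' Fp Fp' x]
      mem_tau_tabloid_of_iff[OF inj' p' p F'p' F'p x] \<open>fst p < fst w\<close> \<open>fst w \<le> fst p'\<close> by auto
  moreover have "F p' \<notin> tau n (tabloid_of lam F)" "F p' \<in> tau n (tabloid_of lam ?F')"
    using mem_tau_tabloid_of_iff[OF inj p' w refl Fw y]
      mem_tau_tabloid_of_iff[OF inj' p w F'p[folded Fp'] F'w[unfolded Fw] y]
      \<open>fst p < fst w\<close> \<open>fst w \<le> fst p'\<close> by auto
  ultimately show ?thesis
    using knuth_move_swap_cellsI[OF inj p p' \<open>p \<noteq> p'\<close> Fp Fp' x] by blast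
qed

lemma knuth_move_swap_cells_pred:
  assumes inj: "inj_on F (young_diagram lam)" and range: "F ` young_diagram lam \<subseteq> {0..<int n}"
    and p: "p \<in> young_diagram lam" and p': "p' \<in> young_diagram lam" and w: "w \<in> young_diagram lam"
    and Fp: "F p = x" and Fp': "F p' = (x + 1) mod int n" and Fw: "(F w + 1) mod int n = x"
    and "w \<noteq> p'" and "fst p' \<le> fst w" and "fst w < fst p"
  shows "knuth_move n (tabloid_of lam F) (tabloid_of lam (swap_cells F p p'))"
proof -
  let ?F' = "swap_cells F p p'"
  have "p \<noteq> p'" "w \<noteq> p" using \<open>fst p' \<le> fst w\<close> \<open>fst w < fst p\<close> by auto
  have inj': "inj_on ?F' (young_diagram lam)"
    unfolding swap_cells_eq_swap using inj p p' by (rule inj_on_imp_inj_on_swap)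
  have F'p: "?F' p = (x + 1) mod int n" and F'p': "?F' p' = x" and F'w: "?F' w = F w"
    using Fp Fp' \<open>p \<noteq> p'\<close> \<open>w \<noteq> p\<close> \<open>w \<noteq> p'\<close> by (auto simp: swap_cells_def)
  have x: "x \<in> {0..<int n}" and y: "F w \<in> {0..<int n}" using range p w Fp by auto
  have "x \<notin> tau n (tabloid_of lam F)" "x \<in> tau n (tabloid_of lam ?F')"
    using mem_tau_tabloid_of_iff[OF inj p p' Fp Fp' x]
      mem_tau_tabloid_of_iff[OF inj' p' p F'p' F'p x] \<open>fst p' \<le> fst w\<close> \<open>fst w < fst p\<close> by auto
  moreover have "F w \<in> tau n (tabloid_of lam F)" "F w \<notin> tau n (tabloid_of lam ?F')"
    using mem_tau_tabloid_of_iff[OF inj w p refl Fp[folded Fw] y]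
      mem_tau_tabloid_of_iff[OF inj' w p' F'w F'p'[folded Fw] y]
      \<open>fst p' \<le> fst w\<close> \<open>fst w < fst p\<close> by auto
  ultimately show ?thesis
    using knuth_move_swap_cellsI[OF inj p p' \<open>p \<noteq> p'\<close> Fp Fp' x] by blast
qed

text \<open>Closed form of the filling after q (k + l) + s exchanges: each completed pass down
  column c1 raises its entries by one residue and sets one more cell (r, c2) to i + r.\<close>

definition sweep_filling ::
  "(nat \<times> nat \<Rightarrow> int) \<Rightarrow> nat \<Rightarrow> int \<Rightarrow> nat \<Rightarrow> nat \<Rightarrow> nat \<Rightarrow> nat \<Rightarrow> nat \<Rightarrow> nat \<Rightarrow> nat \<times> nat \<Rightarrow> int"
where
  "sweep_filling T n i k l c1 c2 q s = (\<lambda>(r, c).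
     if c = c1 \<and> 1 \<le> r \<and> r \<le> k + l then
       (i + int q + int r + (if k + l < r + s then 1 else 0)) mod int n
     else if c = c2 \<and> 1 \<le> r \<and> r \<le> l then
       (if r \<le> q then i + int r
        else if r = q + 1 then i + int q + 1 + int (k + l) - int s
        else i + int (k + l) + int r) mod int n
     else T (r, c))"

lemma sweep_filling_0_0:
  assumes "c1 \<noteq> c2"
    and "\<forall>r. 1 \<le> r \<and> r \<le> k + l \<longrightarrow> T (r, c1) = (i + int r) mod int n"
    and "\<forall>r. 1 \<le> r \<and> r \<le> l \<longrightarrow> T (r, c2) = (i + int (k + l) + int r) mod int n"
  shows "sweep_filling T n i k l c1 c2 0 0 = T"
  using assms by (auto simp: sweep_filling_def fun_eq_iff algebra_simps)

lemma sweep_filling_wrap: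
  "sweep_filling T n i k l c1 c2 q (k + l) = sweep_filling T n i k l c1 c2 (Suc q) 0"
  by (auto simp: sweep_filling_def fun_eq_iff algebra_simps)

lemma swap_cells_sweep_filling:
  assumes "c1 \<noteq> c2" "s < k + l" "q < l"
  shows "swap_cells (sweep_filling T n i k l c1 c2 q s) (k + l - s, c1) (q + 1, c2)
       = sweep_filling T n i k l c1 c2 q (Suc s)"
proof -
  let ?F = "sweep_filling T n i k l c1 c2 q s" and ?G = "sweep_filling T n i k l c1 c2 q (Suc s)"
  have "1 \<le> k + l - s" using assms by simp
  then have "?G (k + l - s, c1) = ?F (q + 1, c2)" "?G (q + 1, c2) = ?F (k + l - s, c1)"
    using assms by (simp_all add: sweep_filling_def of_nat_diff algebra_simps)
  moreover have "?G (r, c) = ?F (r, c)" if "(r, c) \<noteq> (k + l - s, c1)" "(r, c) \<noteq> (q + 1, c2)" for r c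
  proof -
    have "c = c1 \<Longrightarrow> 1 \<le> r \<Longrightarrow> (k + l < r + s \<longleftrightarrow> k + l < r + Suc s)"
      and "c = c2 \<Longrightarrow> r \<noteq> q + 1"
      using that by auto
    then show ?thesis by (simp add: sweep_filling_def)
  qed
  ultimately show ?thesis by (auto simp: swap_cells_def fun_eq_iff)
qed

lemma sweep_filling_exchanged_entries:
  fixes T :: "nat \<times> nat \<Rightarrow> int" and n :: nat and i :: int and c1 c2 :: nat
  assumes "c1 \<noteq> c2" "s < k + l" "q < l"
  defines "F \<equiv> sweep_filling T n i k l c1 c2 q s" and "a \<equiv> k + l - s"
  shows "F (q + 1, c2) = (F (a, c1) + 1) mod int n"
    and "a < q + 1 \<Longrightarrow> F (a + 1, c1) = (F (q + 1, c2) + 1) mod int n"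
    and "q + 1 < a \<Longrightarrow> (F (a - 1, c1) + 1) mod int n = F (a, c1)"
  using assms by (auto simp: sweep_filling_def of_nat_diff mod_simps algebra_simps)

lemma fill_seq_Suc:
  assumes "0 < k + l"
  shows "fill_seq T k l c1 c2 (Suc j)
       = swap_cells (fill_seq T k l c1 c2 j) (k + l - j mod (k + l), c1) (j div (k + l) + 1, c2)"
proof -
  have "(k + l) * (j div (k + l) + 1) + 1 - Suc j = k + l - j mod (k + l)"
    using div_mult_mod_eq[of j "k + l"] by (simp add: algebra_simps)
  then show ?thesis
    using nat_ceiling_Suc_divide[OF assms] by (simp add: Let_def)
qed

lemma fill_seq_eq_sweep_filling:
  assumes "c1 \<noteq> c2"
    and "\<forall>r. 1 \<le> r \<and> r \<le> k + l \<longrightarrow> T (r, c1) = (i + int r) mod int n"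
    and "\<forall>r. 1 \<le> r \<and> r \<le> l \<longrightarrow> T (r, c2) = (i + int (k + l) + int r) mod int n"
  shows "j \<le> (k + l) * l \<Longrightarrow>
    fill_seq T k l c1 c2 j = sweep_filling T n i k l c1 c2 (j div (k + l)) (j mod (k + l))"
proof (induction j)
  case 0
  then show ?case using sweep_filling_0_0[OF assms] by simp
next
  case (Suc j)
  let ?K = "k + l"
  have "j < ?K * l" using Suc.prems by simp
  then have K: "0 < ?K" and q: "j div ?K < l" and s: "j mod ?K < ?K"
    by (rule less_mult_imp_div_mod_bounds)+
  have "fill_seq T k l c1 c2 (Suc j) = sweep_filling T n i k l c1 c2 (j div ?K) (Suc (j mod ?K))"
    using Suc fill_seq_Suc[OF K] swap_cells_sweep_filling[OF assms(1) s q]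
    by (simp del: fill_seq.simps)
  also have "\<dots> = sweep_filling T n i k l c1 c2 (Suc j div ?K) (Suc j mod ?K)"
  proof (cases "Suc (j mod ?K) < ?K")
    case True
    then show ?thesis by (simp add: div_Suc mod_Suc)
  next
    case False
    then have "Suc (j mod ?K) = ?K" using s by simp
    then show ?thesis by (simp add: div_Suc mod_Suc sweep_filling_wrap)
  qed
  finally show ?case .
qed

lemma bij_betw_fill_seq:
  assumes "bij_betw T (young_diagram lam) A"
    and "\<forall>r. (r, c1) \<in> young_diagram lam \<longleftrightarrow> 1 \<le> r \<and> r \<le> k + l"
    and "\<forall>r. (r, c2) \<in> young_diagram lam \<longleftrightarrow> 1 \<le> r \<and> r \<le> l"
  shows "j \<le> (k + l) * l \<Longrightarrow> bij_betw (fill_seq T k l c1 c2 j) (young_diagram lam) A"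
proof (induction j)
  case 0
  then show ?case using assms(1) by simp
next
  case (Suc j)
  have "j < (k + l) * l" using Suc.prems by simp
  then have K: "0 < k + l" and q: "j div (k + l) < l" and s: "j mod (k + l) < k + l"
    by (rule less_mult_imp_div_mod_bounds)+
  have "(k + l - j mod (k + l), c1) \<in> young_diagram lam" "(j div (k + l) + 1, c2) \<in> young_diagram lam"
    using assms(2,3) q s by (auto simp: Suc_le_eq)
  moreover have "bij_betw (fill_seq T k l c1 c2 j) (young_diagram lam) A"
    using Suc by simp
  ultimately show ?case
    unfolding fill_seq_Suc[OF K] swap_cells_eq_swap by (metis bij_betw_swap_iff)
qed

lemma tabloid_fill_seq_Suc_eq_or_knuth_move:
  assumes bij: "bij_betw T (young_diagram lam) {0..<int n}"
    and "c1 \<noteq> c2"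
    and col1: "\<forall>r. (r, c1) \<in> young_diagram lam \<longleftrightarrow> 1 \<le> r \<and> r \<le> k + l"
    and "\<forall>r. 1 \<le> r \<and> r \<le> k + l \<longrightarrow> T (r, c1) = (i + int r) mod int n"
    and col2: "\<forall>r. (r, c2) \<in> young_diagram lam \<longleftrightarrow> 1 \<le> r \<and> r \<le> l"
    and "\<forall>r. 1 \<le> r \<and> r \<le> l \<longrightarrow> T (r, c2) = (i + int (k + l) + int r) mod int n"
    and j: "j < (k + l) * l"
  shows "tabloid_of lam (fill_seq T k l c1 c2 j) = tabloid_of lam (fill_seq T k l c1 c2 (Suc j))
       \<or> knuth_move n (tabloid_of lam (fill_seq T k l c1 c2 j)) (tabloid_of lam (fill_seq T k l c1 c2 (Suc j)))"
proof -
  let ?D = "young_diagram lam"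
  obtain K: "0 < k + l" and q: "j div (k + l) < l" and s: "j mod (k + l) < k + l"
    using less_mult_imp_div_mod_bounds[OF j] by blast
  define F where "F = fill_seq T k l c1 c2 j"
  define a where "a = k + l - j mod (k + l)"
  define b where "b = j div (k + l) + 1"
  have step: "fill_seq T k l c1 c2 (Suc j) = swap_cells F (a, c1) (b, c2)"
    unfolding F_def a_def b_def by (rule fill_seq_Suc[OF K])
  have entries: "F (b, c2) = (F (a, c1) + 1) mod int n"
      "a < b \<Longrightarrow> F (a + 1, c1) = (F (b, c2) + 1) mod int n"
      "b < a \<Longrightarrow> (F (a - 1, c1) + 1) mod int n = F (a, c1)"
    using sweep_filling_exchanged_entries[OF \<open>c1 \<noteq> c2\<close> s q]
    unfolding F_def a_def b_def fill_seq_eq_sweep_filling[OF assms(2,4,6) less_imp_le[OF j]]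
    by simp_all
  have "bij_betw F ?D {0..<int n}"
    unfolding F_def using bij_betw_fill_seq[OF bij col1 col2] j by simp
  then have inj: "inj_on F ?D" and range: "F ` ?D \<subseteq> {0..<int n}"
    by (auto simp: bij_betw_def)
  have a: "1 \<le> a" "a \<le> k + l" and b: "1 \<le> b" "b \<le> l"
    using s q unfolding a_def b_def by linarith+
  then have pa: "(a, c1) \<in> ?D" and pb: "(b, c2) \<in> ?D"
    using col1 col2 by auto
  consider "a = b" | "a < b" | "b < a" by linarith
  then have "tabloid_of lam F = tabloid_of lam (swap_cells F (a, c1) (b, c2))
      \<or> knuth_move n (tabloid_of lam F) (tabloid_of lam (swap_cells F (a, c1) (b, c2)))"
  proof cases
    case 1
    then show ?thesis
      using tabloid_of_swap_cells_same_row[OF pa] pb by simp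
  next
    case 2
    have "(a + 1, c1) \<in> ?D" using col1 2 b by simp
    then show ?thesis
      using knuth_move_swap_cells_succ[OF inj range pa pb _ refl entries(1) entries(2)[OF 2]]
        2 \<open>c1 \<noteq> c2\<close> by simp
  next
    case 3
    have "1 \<le> a - 1" "a - 1 \<le> k + l" using 3 a b by linarith+
    then have "(a - 1, c1) \<in> ?D" using col1 by blast
    then show ?thesis
      using knuth_move_swap_cells_pred[OF inj range pa pb _ refl entries(1) entries(3)[OF 3]]
        3 \<open>c1 \<noteq> c2\<close> by simp
  qed
  then show ?thesis by (simp only: step F_def)
qed

theorem proposition7p16:
  fixes n :: nat and lam :: "nat list" and T :: "nat \<times> nat \<Rightarrow> int"
    and c1 c2 k l :: nat and i :: int
  assumes "is_partition n lam"
    and "bij_betw T (young_diagram lam) {0..<int n}"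
    and "c1 \<noteq> c2"
    and "\<forall>r. (r, c1) \<in> young_diagram lam \<longleftrightarrow> 1 \<le> r \<and> r \<le> k + l"
    and "\<forall>r. 1 \<le> r \<and> r \<le> k + l \<longrightarrow> T (r, c1) = (i + int r) mod int n"
    and "\<forall>r. (r, c2) \<in> young_diagram lam \<longleftrightarrow> 1 \<le> r \<and> r \<le> l"
    and "\<forall>r. 1 \<le> r \<and> r \<le> l \<longrightarrow> T (r, c2) = (i + int (k + l) + int r) mod int n"
  shows "\<forall>j \<in> {1..(k + l) * l}.
           tabloid_of lam (fill_seq T k l c1 c2 (j - 1)) = tabloid_of lam (fill_seq T k l c1 c2 j)
         \<or> knuth_move n (tabloid_of lam (fill_seq T k l c1 c2 (j - 1))) (tabloid_of lam (fill_seq T k l c1 c2 j))"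
proof
  fix j assume "j \<in> {1..(k + l) * l}"
  then have "j = Suc (j - 1)" "j - 1 < (k + l) * l" by auto
  then show "tabloid_of lam (fill_seq T k l c1 c2 (j - 1)) = tabloid_of lam (fill_seq T k l c1 c2 j)
         \<or> knuth_move n (tabloid_of lam (fill_seq T k l c1 c2 (j - 1))) (tabloid_of lam (fill_seq T k l c1 c2 j))"
    using tabloid_fill_seq_Suc_eq_or_knuth_move[OF assms(2-7)] by metis
qed

end
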